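(* Let $n$ be a positive integer and $s$ a positive divisor of $n$. Let $D(n,s)$ be the set of positive divisors of $n$ that do not divide $s$, and let $M(n,s)$ be the square matrix with rows and columns indexed by $D(n,s)$ and $(d_1,d_2)$-entry $\gcd(d_1,d_2)-\gcd(d_1,d_2,s)$. Then $$\det M(n,s)=\prod_{d\in D(n,s)}\varphi(d),$$ where $\varphi$ is Euler's totient function. In particular, $M(n,s)$ is invertible.
   Context: The determinant of an empty matrix is taken to be $1$. *)

theory Defs
  imports "Jordan_Normal_Form.Determinant" "HOL-Number_Theory.Totient"
begin

definition Dset :: "nat \<Rightarrow> nat \<Rightarrow> nat set" where
  "Dset n s = {d. d dvd n \<and> 0 < d \<and> \<not> d dvd s}"

text \<open>M(n,s): square matrix indexed by D(n,s) (listed in increasing order;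
  the determinant does not depend on the chosen order since rows and columns
  are permuted simultaneously), entry gcd(d1,d2) - gcd(d1,d2,s), over the rationals.\<close>
definition Mmat :: "nat \<Rightarrow> nat \<Rightarrow> rat mat" where
  "Mmat n s = (let xs = sorted_list_of_set (Dset n s); k = length xs in
     mat k k (\<lambda>(i, j). of_nat (gcd (xs ! i) (xs ! j)) - of_nat (gcd (gcd (xs ! i) (xs ! j)) s)))"

end

theory Submission
  imports Defs
begin

text \<open>
  For \<open>d\<^sub>1, d\<^sub>2 \<in> D(n,s)\<close> the common divisors of \<open>d\<^sub>1\<close> and \<open>d\<^sub>2\<close> lying in \<open>D(n,s)\<close> are
  exactly the divisors of \<open>g = gcd d\<^sub>1 d\<^sub>2\<close> not dividing \<open>s\<close>, and by Gauss' identity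
  \<open>\<Sum>\<^sub>e\<^sub>|\<^sub>g \<phi> e = g\<close> their totients sum to \<open>g - gcd g s\<close>. So \<open>M(n,s)\<close> is the matrix
  \<open>(\<Sum>\<^bsub>e \<in> S, e dvd x, e dvd y\<^esub> \<phi> e)\<^sub>x\<^sub>,\<^sub>y\<^sub>\<in>\<^sub>S\<close> for \<open>S = D(n,s)\<close>. As in Smith's evaluation of
  gcd determinants, such a matrix is \<open>Z \<cdot> Y\<close> with \<open>Z\<^sub>x\<^sub>e = [e dvd x]\<close> and
  \<open>Y\<^sub>e\<^sub>y = [e dvd y] \<phi> e\<close>; listing \<open>S\<close> in increasing order makes \<open>Z\<close> lower unitriangular
  and \<open>Y\<close> upper triangular with diagonal \<open>\<phi>\<close>, so the determinant is \<open>\<Prod>\<^sub>d\<^sub>\<in>\<^sub>S \<phi> d \<noteq> 0\<close>.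
\<close>

lemma totient_sum_divisors_not_dvd:
  fixes g s :: nat
  assumes "0 < g"
  shows "(\<Sum>e | e dvd g \<and> \<not> e dvd s. totient e) = g - gcd g s"
proof -
  have fin: "finite {e. e dvd g}" using assms by simp
  have split: "{e. e dvd g} = {e. e dvd g \<and> e dvd s} \<union> {e. e dvd g \<and> \<not> e dvd s}" by blast
  have "g = (\<Sum>e | e dvd g. totient e)" by (rule totient_divisor_sum[symmetric])
  also have "\<dots> = (\<Sum>e | e dvd g \<and> e dvd s. totient e) + (\<Sum>e | e dvd g \<and> \<not> e dvd s. totient e)"
    by (subst split, rule sum.union_disjoint) (use fin in auto)
  also have "{e. e dvd g \<and> e dvd s} = {e. e dvd gcd g s}" by auto
  also have "(\<Sum>e | e dvd gcd g s. totient e) = gcd g s" by (rule totient_divisor_sum)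
  finally show ?thesis by linarith
qed

lemma sorted_positive_nth_not_dvd:
  fixes xs :: "nat list"
  assumes "sorted_wrt (<) xs" and "0 \<notin> set xs" and "i < j" and "j < length xs"
  shows "\<not> xs ! j dvd xs ! i"
proof
  assume "xs ! j dvd xs ! i"
  moreover have "0 < xs ! i" using assms nth_mem by (metis gr0I order.strict_trans)
  ultimately have "xs ! j \<le> xs ! i" by (rule dvd_imp_le)
  moreover have "xs ! i < xs ! j" using assms sorted_wrt_nth_less by blast
  ultimately show False by simp
qed

lemma det_divisor_sum_mat:
  fixes S :: "nat set" and f :: "nat \<Rightarrow> 'a :: comm_ring_1"
  assumes "finite S" and "0 \<notin> S"
  defines "xs \<equiv> sorted_list_of_set S"
  shows "det (mat (length xs) (length xs)
           (\<lambda>(i, j). \<Sum>e\<in>{e \<in> S. e dvd xs ! i \<and> e dvd xs ! j}. f e)) = (\<Prod>e\<in>S. f e)"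
proof -
  define k where "k = length xs"
  have set_xs: "set xs = S" and "distinct xs" using assms by (auto simp: xs_def)
  have not_dvd: "\<not> xs ! j dvd xs ! i" if "i < j" "j < k" for i j
    using sorted_positive_nth_not_dvd[OF _ _ that[unfolded k_def]] assms(2) set_xs
    by (simp add: xs_def)
  have bij: "bij_betw ((!) xs) {0..<k} S"
    using bij_betw_nth[OF \<open>distinct xs\<close> _ set_xs[symmetric]] by (simp add: k_def atLeast0LessThan)
  define Z :: "'a mat" where "Z = mat k k (\<lambda>(i, l). if xs ! l dvd xs ! i then 1 else 0)"
  define Y :: "'a mat" where "Y = mat k k (\<lambda>(l, j). if xs ! l dvd xs ! j then f (xs ! l) else 0)"
  have Z: "Z \<in> carrier_mat k k" and Y: "Y \<in> carrier_mat k k" by (auto simp: Z_def Y_def)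
  have "mat k k (\<lambda>(i, j). \<Sum>e\<in>{e \<in> S. e dvd xs ! i \<and> e dvd xs ! j}. f e) = Z * Y"
  proof (rule eq_matI)
    fix i j assume "i < dim_row (Z * Y)" "j < dim_col (Z * Y)"
    then have i: "i < k" and j: "j < k" using Z Y by auto
    have "(Z * Y) $$ (i, j) = (\<Sum>l\<in>{0..<k}. Z $$ (i, l) * Y $$ (l, j))"
      using i j Z Y by (simp add: scalar_prod_def)
    also have "\<dots> = (\<Sum>l\<in>{0..<k}.
        (\<lambda>e. if e dvd xs ! i \<and> e dvd xs ! j then f e else 0) (xs ! l))"
      by (rule sum.cong) (use i j in \<open>auto simp: Z_def Y_def\<close>)
    also have "\<dots> = (\<Sum>e\<in>S. if e dvd xs ! i \<and> e dvd xs ! j then f e else 0)"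
      by (rule sum.reindex_bij_betw[OF bij])
    also have "\<dots> = (\<Sum>e\<in>{e \<in> S. e dvd xs ! i \<and> e dvd xs ! j}. f e)"
      by (simp add: sum.inter_filter[OF \<open>finite S\<close>])
    finally show "mat k k (\<lambda>(i, j). \<Sum>e\<in>{e \<in> S. e dvd xs ! i \<and> e dvd xs ! j}. f e) $$ (i, j)
        = (Z * Y) $$ (i, j)"
      using i j by simp
  qed (use Z Y in auto)
  moreover have "det Z = 1"
  proof -
    have "det Z = prod_list (diag_mat Z)"
      by (rule det_lower_triangular[OF _ Z]) (use not_dvd in \<open>auto simp: Z_def\<close>)
    then show ?thesis using Z by (simp add: prod_list_diag_prod Z_def)
  qed
  moreover have "det Y = (\<Prod>e\<in>S. f e)"
  proof -
    have "det Y = prod_list (diag_mat Y)"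
      by (rule det_upper_triangular[OF _ Y])
        (use not_dvd in \<open>auto simp: Y_def upper_triangular_def\<close>)
    also have "\<dots> = (\<Prod>l\<in>{0..<k}. f (xs ! l))"
      using Y by (simp add: prod_list_diag_prod Y_def)
    also have "\<dots> = (\<Prod>e\<in>S. f e)" by (rule prod.reindex_bij_betw[OF bij])
    finally show ?thesis .
  qed
  ultimately show ?thesis by (simp add: det_mult[OF Z Y] k_def)
qed

lemma invertible_mat_if_det_nonzero:
  fixes A :: "'a :: field mat"
  assumes A: "A \<in> carrier_mat n n" and "det A \<noteq> 0"
  shows "invertible_mat A"
proof -
  have "A \<in> Units (ring_mat TYPE('a) n ())" by (rule det_non_zero_imp_unit[OF assms])
  then obtain B where "B \<in> carrier_mat n n" "A * B = 1\<^sub>m n" "B * A = 1\<^sub>m n"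
    unfolding Units_def ring_mat_def by auto
  then show ?thesis
    unfolding invertible_mat_def inverts_mat_def using A by (auto intro!: exI[of _ B])
qed

lemma finite_Dset: "0 < n \<Longrightarrow> finite (Dset n s)"
  unfolding Dset_def by (rule finite_subset[of _ "{d. d dvd n}"]) auto

lemma Dset_common_divisors:
  assumes "d\<^sub>1 \<in> Dset n s"
  shows "{e \<in> Dset n s. e dvd d\<^sub>1 \<and> e dvd d\<^sub>2} = {e. e dvd gcd d\<^sub>1 d\<^sub>2 \<and> \<not> e dvd s}"
proof -
  from assms have "d\<^sub>1 dvd n" and "0 < d\<^sub>1" by (simp_all add: Dset_def)
  then have "e dvd n" if "e dvd gcd d\<^sub>1 d\<^sub>2" for e
    using that by (meson dvd_trans gcd_dvd1)
  moreover have "0 < e" if "e dvd gcd d\<^sub>1 d\<^sub>2" for e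
    using \<open>0 < d\<^sub>1\<close> by (intro dvd_pos_nat[OF _ that]) simp
  ultimately show ?thesis unfolding Dset_def by auto
qed

lemma Mmat_eq_divisor_sum_mat:
  fixes n s :: nat
  assumes "0 < n"
  defines "xs \<equiv> sorted_list_of_set (Dset n s)"
  shows "Mmat n s = mat (length xs) (length xs) (\<lambda>(i, j).
           \<Sum>e\<in>{e \<in> Dset n s. e dvd xs ! i \<and> e dvd xs ! j}. of_nat (totient e))"
proof -
  have entry: "of_nat (gcd d\<^sub>1 d\<^sub>2) - of_nat (gcd (gcd d\<^sub>1 d\<^sub>2) s) =
      (\<Sum>e\<in>{e \<in> Dset n s. e dvd d\<^sub>1 \<and> e dvd d\<^sub>2}. (of_nat (totient e) :: rat))"
    if "d\<^sub>1 \<in> Dset n s" for d\<^sub>1 d\<^sub>2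
  proof -
    have g: "0 < gcd d\<^sub>1 d\<^sub>2" using that by (simp add: Dset_def)
    have "(\<Sum>e\<in>{e \<in> Dset n s. e dvd d\<^sub>1 \<and> e dvd d\<^sub>2}. (of_nat (totient e) :: rat))
        = of_nat (\<Sum>e | e dvd gcd d\<^sub>1 d\<^sub>2 \<and> \<not> e dvd s. totient e)"
      unfolding Dset_common_divisors[OF that] by (rule of_nat_sum[symmetric])
    also have "\<dots> = of_nat (gcd d\<^sub>1 d\<^sub>2 - gcd (gcd d\<^sub>1 d\<^sub>2) s)"
      by (simp only: totient_sum_divisors_not_dvd[OF g])
    also have "\<dots> = of_nat (gcd d\<^sub>1 d\<^sub>2) - of_nat (gcd (gcd d\<^sub>1 d\<^sub>2) s)"
      using g by (intro of_nat_diff gcd_le1_nat) simp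
    finally show ?thesis by (rule sym)
  qed
  have "set xs = Dset n s" using finite_Dset[OF assms(1)] by (simp add: xs_def)
  then have "xs ! i \<in> Dset n s" if "i < length xs" for i using that nth_mem by blast
  then show ?thesis
    unfolding Mmat_def Let_def xs_def[symmetric] by (intro cong_mat) (simp_all add: entry)
qed

theorem lemma4p5:
  fixes n s :: nat
  assumes "0 < n" and "0 < s" and "s dvd n"
  shows "det (Mmat n s) = (\<Prod>d\<in>Dset n s. of_nat (totient d))
         \<and> invertible_mat (Mmat n s)"
proof -
  have fin: "finite (Dset n s)" and "0 \<notin> Dset n s"
    using finite_Dset[OF \<open>0 < n\<close>] by (auto simp: Dset_def)
  then have det: "det (Mmat n s) = (\<Prod>d\<in>Dset n s. of_nat (totient d))"
    unfolding Mmat_eq_divisor_sum_mat[OF \<open>0 < n\<close>] by (rule det_divisor_sum_mat)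
  moreover have "det (Mmat n s) \<noteq> 0"
    unfolding det using fin by (auto simp: Dset_def)
  moreover have "Mmat n s \<in> carrier_mat (card (Dset n s)) (card (Dset n s))"
    using fin by (simp add: Mmat_def Let_def)
  ultimately show ?thesis by (simp add: invertible_mat_if_det_nonzero)
qed

end
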